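(* Let $d\ge3$, let $u,v\in\mathbb{S}^{d-1}$ be unit vectors with $\theta(u,v)=\theta\in[0,\frac9{10}\pi]$, and let $0\le\xi\le\frac{\theta}{4\sqrt d}$. Let $x$ be drawn uniformly from $\{x\in\mathbb{S}^{d-1}: v\cdot x=\xi\}$ (i.e. uniform on the sphere conditioned on $v\cdot x=\xi$). Then: (1) $\mathbb{E}[u\cdot x]\le\xi$; (2) $\mathbb{E}[(u\cdot x)^2]\le\frac{5\theta^2}{d}$; (3) $\mathbb{E}[(u\cdot x)\,\mathbb{1}\{u\cdot x<0\}]\le\xi-\frac{\theta}{36\sqrt d}$.
   Context: $\mathbb{S}^{d-1}$ is the unit sphere in $\mathbb{R}^d$; $\theta(u,v)=\arccos(u\cdot v)$. *)

theory Defs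
  imports "HOL-Probability.Probability"
begin

definition sphere_slice :: "'a::euclidean_space \<Rightarrow> real \<Rightarrow> 'a set" where
  "sphere_slice v \<xi> = {x. norm x = 1 \<and> v \<bullet> x = \<xi>}"

text \<open>M is the uniform distribution on the slice: a Borel probability measure
  concentrated on the slice and invariant under every orthogonal transformation
  fixing v (the symmetry group of the slice, which acts transitively on it).\<close>
definition uniform_on_slice :: "'a::euclidean_space measure \<Rightarrow> 'a \<Rightarrow> real \<Rightarrow> bool" where
  "uniform_on_slice M v \<xi> \<longleftrightarrow>
     prob_space M \<and> sets M = sets borel \<and>
     emeasure M (sphere_slice v \<xi>) = 1 \<and>
     (\<forall>T. orthogonal_transformation T \<and> T v = v \<longrightarrow> distr M borel T = M)"

end

theory Submission
  imports Defs
begin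

(* The uniform measure on the slice {x. |x| = 1, v.x = xi} is invariant under every reflection
   fixing v.  Write u = (u.v) v + w with w orthogonal to v and |w| = sin theta.  The reflections
   make the odd moments of w.x vanish and its even moments depend only on |w|; Parseval's identity
   on the slice for an orthonormal frame of the complement of v then gives
     E (w.x)^2 = |w|^2 (1 - xi^2)/(d - 1),   E (w.x)^4 = 3 |w|^4 (1 - xi^2)^2/((d - 1)(d + 1)).  For the third, y 1{y < 0} is bounded above by a quartic
   polynomial in w.x with a free scale t; integrating with t of order sin theta / sqrt d, and using
   sin theta >= 27 theta/250 on [0, 9 pi/10], gives a gain of order theta / sqrt d. *)

section \<open>Reflections and orthonormal frames\<close>

definition householder :: "'a::real_inner \<Rightarrow> 'a \<Rightarrow> 'a" where
  "householder a x = x - (2 * (a \<bullet> x) / (a \<bullet> a)) *\<^sub>R a"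

lemma linear_householder: "linear (householder a)"
  unfolding householder_def
  by (intro linearI) (auto simp: inner_add_right algebra_simps add_divide_distrib scaleR_add_left)

lemma inner_householder_swap: "householder a x \<bullet> y = x \<bullet> householder a y"
  unfolding householder_def by (simp add: inner_diff_left inner_diff_right inner_commute algebra_simps)

lemma householder_householder [simp]: "householder a (householder a x) = x"
proof (cases "a = 0")
  case False
  then have "a \<bullet> a \<noteq> 0" by simp
  then show ?thesis unfolding householder_def by (simp add: inner_diff_right algebra_simps)
qed (simp add: householder_def)

lemma inner_householder [simp]: "householder a x \<bullet> householder a y = x \<bullet> y"
  by (simp add: inner_householder_swap)

lemma orthogonal_transformation_householder: "orthogonal_transformation (householder a)"
  unfolding orthogonal_transformation_def using linear_householder by simp

lemma householder_orthogonal: "a \<bullet> x = 0 \<Longrightarrow> householder a x = x"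
  by (simp add: householder_def)

lemma householder_self: "householder a a = - a"
  by (cases "a = 0") (simp_all add: householder_def scaleR_2)

lemma householder_diff_swap:
  assumes "norm p = norm q" shows "householder (p - q) p = q"
proof (cases "p = q")
  case False
  have "p \<bullet> p = q \<bullet> q" using assms by (simp add: power2_norm_eq_inner[symmetric])
  then have "(p - q) \<bullet> (p - q) = 2 * ((p - q) \<bullet> p)"
    by (simp add: inner_diff_left inner_diff_right inner_commute)
  moreover have "(p - q) \<bullet> (p - q) \<noteq> 0" using False by simp
  ultimately have "2 * ((p - q) \<bullet> p) / ((p - q) \<bullet> (p - q)) = 1" by (metis divide_self)
  then have "householder (p - q) p = p - 1 *\<^sub>R (p - q)" unfolding householder_def by (simp only:)
  then show ?thesis by simp
qed (simp add: householder_def)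

lemma continuous_on_householder: "continuous_on S (householder (a::'a::euclidean_space))"
  using linear_householder linear_conv_bounded_linear linear_continuous_on by blast

lemma orthonormal_frame_through:
  fixes v :: "real^'n" assumes "norm v = 1"
  obtains b :: "'n \<Rightarrow> real^'n" and k
  where "b k = v" "\<And>i j. b i \<bullet> b j = (if i = j then 1 else 0)"
    "\<And>x. (\<Sum>i\<in>UNIV. (b i \<bullet> x)\<^sup>2) = (norm x)\<^sup>2"
proof -
  obtain k :: 'n where True by simp
  define H where "H = householder (v - axis k 1)"
  have "H v = axis k 1" unfolding H_def by (rule householder_diff_swap) (simp add: assms)
  then have "H (axis k 1) = v" unfolding H_def by (metis householder_householder)
  moreover have "H (axis i 1) \<bullet> H (axis j 1) = (if i = j then 1 else 0)" for i j
    by (simp add: H_def inner_axis_axis)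
  moreover have "(\<Sum>i\<in>UNIV. (H (axis i 1) \<bullet> x)\<^sup>2) = (norm x)\<^sup>2" for x
  proof -
    have "H (axis i 1) \<bullet> x = H x $ i" for i
      by (simp add: H_def inner_householder_swap inner_axis')
    then have "(\<Sum>i\<in>UNIV. (H (axis i 1) \<bullet> x)\<^sup>2) = H x \<bullet> H x"
      by (simp add: inner_vec_def power2_eq_square)
    then show ?thesis by (simp add: H_def power2_norm_eq_inner)
  qed
  ultimately show ?thesis by (rule that)
qed

definition perp_part :: "'a::real_inner \<Rightarrow> 'a \<Rightarrow> 'a" where
  "perp_part v u = u - (u \<bullet> v) *\<^sub>R v"

lemma inner_perp_part: "norm v = 1 \<Longrightarrow> perp_part v u \<bullet> v = 0"
  by (simp add: perp_part_def inner_diff_left norm_eq_1)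

lemma norm_perp_part_sq: "norm v = 1 \<Longrightarrow> (norm (perp_part v u))\<^sup>2 = (norm u)\<^sup>2 - (u \<bullet> v)\<^sup>2"
  unfolding perp_part_def power2_norm_eq_inner
  by (simp add: inner_diff_left inner_diff_right inner_commute[of v u] norm_eq_1 power2_eq_square algebra_simps)

section \<open>Scalar estimates\<close>

text \<open>Since \<open>y \<cdot> 1{y < 0} = (y - |y|)/2\<close>, it suffices that \<open>|Z| \<ge> (3 t\<^sup>2 Z\<^sup>2 - Z\<^sup>4) / (2 t\<^sup>3)\<close>,
  which is \<open>|Z| (|Z| - t)\<^sup>2 (|Z| + 2t) \<ge> 0\<close>.\<close>
lemma negative_part_le_quartic:
  fixes A Z \<xi> t :: real
  assumes "\<bar>A\<bar> \<le> \<xi>" "0 < t"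
  shows "(A + Z) * (if A + Z < 0 then 1 else 0)
     \<le> (A + \<xi>) / 2 + 1 / 2 * Z + - 3 / (4 * t) * Z\<^sup>2 + 1 / (4 * t ^ 3) * Z ^ 4"
proof -
  define z where "z = \<bar>Z\<bar>"
  have "0 \<le> z * (z - t)\<^sup>2 * (z + 2 * t)" using assms(2) by (simp add: z_def)
  also have "z * (z - t)\<^sup>2 * (z + 2 * t) = z ^ 4 - 3 * t\<^sup>2 * z\<^sup>2 + 2 * t ^ 3 * z"
    by (simp add: algebra_simps power2_eq_square power3_eq_cube power4_eq_xxxx)
  finally have "3 * t\<^sup>2 * Z\<^sup>2 - Z ^ 4 \<le> 2 * t ^ 3 * z"
    by (simp add: z_def power_even_abs)
  then have "(3 * t\<^sup>2 * Z\<^sup>2 - Z ^ 4) / (4 * t ^ 3) \<le> (2 * t ^ 3 * z) / (4 * t ^ 3)"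
    using assms(2) by (intro divide_right_mono) auto
  also have "\<dots> = z / 2" using assms(2) by simp
  also have "(3 * t\<^sup>2 * Z\<^sup>2 - Z ^ 4) / (4 * t ^ 3) = - (- 3 / (4 * t) * Z\<^sup>2 + 1 / (4 * t ^ 3) * Z ^ 4)"
    using assms(2) by (simp add: field_simps power2_eq_square power3_eq_cube)
  finally have quartic: "- (- 3 / (4 * t) * Z\<^sup>2 + 1 / (4 * t ^ 3) * Z ^ 4) \<le> z / 2" .
  have "(A + Z) * (if A + Z < 0 then 1 else 0) \<le> (A + \<xi>) / 2 + 1 / 2 * Z + P + Q"
    if "- (P + Q) \<le> z / 2" for P Q
    using that assms(1) by (auto simp: z_def abs_if field_simps split: if_splits)
  from this[OF quartic] show ?thesis .
qed

lemma sin_ge_Maclaurin_5: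
  fixes x :: real assumes "0 \<le> x"
  shows "x - x ^ 3 / 6 - x ^ 5 / 120 \<le> sin x"
proof -
  have "\<bar>sin x - (\<Sum>m<5. sin_coeff m * x ^ m)\<bar> \<le> inverse (fact 5) * \<bar>x\<bar> ^ 5"
    by (rule Maclaurin_sin_bound)
  moreover have "(\<Sum>m<5. sin_coeff m * x ^ m) = x - x ^ 3 / 6"
  proof -
    have "sin_coeff 0 = 0" "sin_coeff 1 = 1" "sin_coeff 2 = 0" "sin_coeff 3 = -1/6" "sin_coeff 4 = 0"
      by (simp_all add: sin_coeff_def fact_numeral)
    then show ?thesis by (simp add: eval_nat_numeral)
  qed
  moreover have "inverse (fact 5) * \<bar>x\<bar> ^ 5 = x ^ 5 / 120"
  proof -
    have "(fact 5 :: real) = 120" by (simp add: fact_numeral)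
    then show ?thesis using assms by (simp add: field_simps)
  qed
  ultimately have "\<bar>sin x - (x - x ^ 3 / 6)\<bar> \<le> x ^ 5 / 120" by (simp only:)
  then show ?thesis unfolding abs_le_iff by linarith
qed

lemma sin_ge_linear_upto_9_10_pi:
  fixes \<theta> :: real assumes "0 \<le> \<theta>" "\<theta> \<le> 9/10 * pi"
  shows "27/250 * \<theta> \<le> sin \<theta>"
proof (cases "\<theta> \<le> pi/2")
  case True
  have "\<theta>\<^sup>2 \<le> (pi/2)\<^sup>2" using True assms by (intro power_mono) auto
  also have "\<dots> \<le> 1.5708\<^sup>2" using pi_approx by (intro power_mono) auto
  also have "\<dots> \<le> 5/2" by (simp add: power2_eq_square)
  finally have \<theta>2: "\<theta>\<^sup>2 \<le> 5/2" .
  have "\<theta> ^ 3 = \<theta> * \<theta>\<^sup>2" "\<theta> ^ 5 = \<theta> * (\<theta>\<^sup>2)\<^sup>2" by algebra+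
  moreover have "\<theta> * \<theta>\<^sup>2 \<le> \<theta> * (5/2)" using \<theta>2 assms by (intro mult_left_mono) auto
  moreover have "\<theta> * (\<theta>\<^sup>2)\<^sup>2 \<le> \<theta> * (5/2)\<^sup>2" using \<theta>2 assms by (intro mult_left_mono power_mono) auto
  ultimately have "27/250 * \<theta> \<le> \<theta> - \<theta> ^ 3 / 6 - \<theta> ^ 5 / 120" using assms by (simp add: power2_eq_square)
  then show ?thesis using sin_ge_Maclaurin_5[OF assms(1)] by linarith
next
  case False
  have p: "314159/100000 \<le> pi" "pi \<le> 3927/1250" using pi_approx by simp_all
  have "(pi/10) ^ 3 \<le> (3927/12500) ^ 3" using p by (intro power_mono) auto
  then have "(pi/10) ^ 3 \<le> 4/125" by (simp add: power3_eq_cube)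
  moreover have "(pi/10) ^ 5 \<le> (3927/12500) ^ 5" using p by (intro power_mono) auto
  then have "(pi/10) ^ 5 \<le> 1/250" by (simp add: eval_nat_numeral)
  ultimately have "153/500 \<le> sin (pi/10)" using sin_ge_Maclaurin_5[of "pi/10"] p by simp
  also have "\<dots> \<le> sin (pi - \<theta>)" using False assms by (intro sin_monotone_2pi_le) auto
  finally show ?thesis using assms p by simp
qed

lemma quadratic_lower_bound_on_5_6_1:
  fixes R :: real assumes "5/6 \<le> R" "R \<le> 1"
  shows "1039/1000 \<le> 12/7 * R - 192/343 * R\<^sup>2"
proof -
  have "0 \<le> (R - 5/6) * (12/7 - 192/343 * (R + 5/6))" using assms by (intro mult_nonneg_nonneg) auto
  then show ?thesis by (simp add: field_simps power2_eq_square)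
qed

lemma exists_quartic_tradeoff:
  fixes s \<theta> d R :: real
  assumes d: "1 < d" and \<theta>: "0 \<le> \<theta>" "27/250 * \<theta> \<le> s" and R: "5/6 \<le> R" "R \<le> 1"
  shows "\<exists>t>0. \<theta> / (9 * sqrt d)
    \<le> 3 * (s\<^sup>2 * (R / (d - 1))) / t - (s\<^sup>2)\<^sup>2 * (3 * R\<^sup>2 / ((d - 1) * (d + 1))) / t ^ 3"
proof (cases "s = 0")
  case True
  then show ?thesis using \<theta> by (intro exI[of _ 1]) simp
next
  case False
  then have s: "0 < s" using \<theta> by simp
  define q where "q = sqrt d"
  have q: "0 < q" "d = q\<^sup>2" using d by (simp_all add: q_def)
  define w where "w = s * q / (d - 1)"
  have w: "0 < w" using s q d by (simp add: w_def)
  define t where "t = 7/4 * s / q" \<comment> \<open>balances the quadratic gain against the quartic loss\<close>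
  have "s / q = s * q / d" using q by (simp add: power2_eq_square)
  also have "\<dots> \<le> w" unfolding w_def using s q d by (intro divide_left_mono) auto
  finally have "\<theta> / (9 * q) \<le> 1039/1000 * w" using \<theta> q by (simp add: field_simps)
  also have "\<dots> \<le> w * (12/7 * R - 192/343 * R\<^sup>2)"
    using w quadratic_lower_bound_on_5_6_1[OF R] by (simp add: mult_left_mono mult.commute)
  also have "\<dots> \<le> 12/7 * w * R - 192/343 * w * (R\<^sup>2 * (d / (d + 1)))"
  proof -
    have "R\<^sup>2 * (d / (d + 1)) \<le> R\<^sup>2" using d by (intro mult_left_le) auto
    then have "w * (R\<^sup>2 * (d / (d + 1))) \<le> w * R\<^sup>2" using w by (intro mult_left_mono) auto
    moreover have "w * (12/7 * R - 192/343 * R\<^sup>2) = 12/7 * w * R - 192/343 * (w * R\<^sup>2)"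
      by (simp add: algebra_simps)
    ultimately show ?thesis by (simp only: mult.assoc)
  qed
  also have "\<dots> = 3 * (s\<^sup>2 * (R / (d - 1))) / t - (s\<^sup>2)\<^sup>2 * (3 * R\<^sup>2 / ((d - 1) * (d + 1))) / t ^ 3"
  proof -
    have "d - 1 \<noteq> 0" "(d - 1) * (d + 1) \<noteq> 0" using d by simp_all
    then have "12/7 * w * R = 3 * (s\<^sup>2 * (R / (d - 1))) / t"
      and "192/343 * w * (R\<^sup>2 * (d / (d + 1))) = (s\<^sup>2)\<^sup>2 * (3 * R\<^sup>2 / ((d - 1) * (d + 1))) / t ^ 3"
      using s q(1) unfolding q(2) t_def w_def by (simp_all add: field_simps power2_eq_square power3_eq_cube)
    then show ?thesis by (simp only:)
  qed
  finally have "\<theta> / (9 * sqrt d)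
      \<le> 3 * (s\<^sup>2 * (R / (d - 1))) / t - (s\<^sup>2)\<^sup>2 * (3 * R\<^sup>2 / ((d - 1) * (d + 1))) / t ^ 3"
    by (simp add: q_def)
  moreover have "0 < t" using s q by (simp add: t_def)
  ultimately show ?thesis by blast
qed

lemma slice_height_bounds:
  fixes \<xi> \<theta> d :: real
  assumes "3 \<le> d" "0 \<le> \<xi>" "\<xi> \<le> \<theta> / (4 * sqrt d)" "0 \<le> \<theta>" "\<theta> \<le> 9/10 * pi"
  shows "\<xi>\<^sup>2 \<le> \<theta>\<^sup>2 / (16 * d)" "5/6 \<le> 1 - \<xi>\<^sup>2"
proof -
  have "\<xi>\<^sup>2 \<le> (\<theta> / (4 * sqrt d))\<^sup>2" using assms(2,3) by (intro power_mono)
  also have "\<dots> = \<theta>\<^sup>2 / (16 * d)" using assms(1) by (simp add: power_divide power_mult_distrib)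
  finally show xi2: "\<xi>\<^sup>2 \<le> \<theta>\<^sup>2 / (16 * d)" .
  have "\<theta>\<^sup>2 \<le> (9/10 * pi)\<^sup>2" using assms(4,5) by (intro power_mono)
  also have "\<dots> \<le> 2.82744\<^sup>2" using pi_approx by (intro power_mono) auto
  also have "\<dots> \<le> 8" by (simp add: power2_eq_square)
  finally have "\<theta>\<^sup>2 / (16 * d) \<le> 8 / (16 * 3)" using assms(1) by (intro frac_le) auto
  then show "5/6 \<le> 1 - \<xi>\<^sup>2" using xi2 by simp
qed

lemma second_moment_estimate:
  fixes a \<xi> \<theta> d :: real
  assumes "3 \<le> d" "a\<^sup>2 \<le> 1" "1 - a\<^sup>2 \<le> \<theta>\<^sup>2" "\<xi>\<^sup>2 \<le> \<theta>\<^sup>2 / (16 * d)"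
  shows "a\<^sup>2 * \<xi>\<^sup>2 + (1 - a\<^sup>2) * ((1 - \<xi>\<^sup>2) / (d - 1)) \<le> 5 * \<theta>\<^sup>2 / d"
proof -
  have "a\<^sup>2 * \<xi>\<^sup>2 \<le> \<theta>\<^sup>2 / (16 * d)" using assms(2,4) mult_right_mono[of "a\<^sup>2" 1 "\<xi>\<^sup>2"] by simp
  moreover have "(1 - a\<^sup>2) * (1 - \<xi>\<^sup>2) \<le> \<theta>\<^sup>2"
    using assms(2,3) mult_left_mono[of "1 - \<xi>\<^sup>2" 1 "1 - a\<^sup>2"] by simp
  then have "(1 - a\<^sup>2) * ((1 - \<xi>\<^sup>2) / (d - 1)) \<le> \<theta>\<^sup>2 / (d - 1)"
    using assms(1) by (simp add: divide_right_mono)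
  moreover have "\<theta>\<^sup>2 * (1 / (16 * d) + 1 / (d - 1)) \<le> \<theta>\<^sup>2 * (5 / d)"
    using assms(1) by (intro mult_left_mono) (simp_all add: field_simps)
  then have "\<theta>\<^sup>2 / (16 * d) + \<theta>\<^sup>2 / (d - 1) \<le> 5 * \<theta>\<^sup>2 / d"
    by (simp add: algebra_simps)
  ultimately show ?thesis by linarith
qed

section \<open>Moments of the uniform distribution on a slice of the sphere\<close>

locale uniform_slice =
  fixes M :: "(real^'n) measure" and v :: "real^'n" and \<xi> :: real
  assumes uniform: "uniform_on_slice M v \<xi>" and norm_v: "norm v = 1"
begin

sublocale prob_space M
  using uniform by (simp add: uniform_on_slice_def)

lemma sets_M: "sets M = sets borel"
  using uniform by (simp add: uniform_on_slice_def)

lemma borel_measurable_M_iff: "f \<in> borel_measurable M \<longleftrightarrow> f \<in> borel_measurable borel"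
  by (simp add: measurable_cong_sets[OF sets_M refl])

lemma continuous_on_borel_measurable_M: "continuous_on UNIV f \<Longrightarrow> f \<in> borel_measurable M"
  by (simp add: borel_measurable_M_iff borel_measurable_continuous_onI)

lemma AE_slice: "AE x in M. norm x = 1 \<and> v \<bullet> x = \<xi>"
proof -
  have "closed (sphere_slice v \<xi>)" unfolding sphere_slice_def
    by (intro closed_Collect_conj closed_Collect_eq continuous_intros)
  then have "sphere_slice v \<xi> \<in> events" using sets_M by (simp add: borel_closed)
  moreover have "prob (sphere_slice v \<xi>) = 1"
    using uniform by (simp add: uniform_on_slice_def measure_def)
  ultimately have "AE x in M. x \<in> sphere_slice v \<xi>" using AE_in_set_eq_1 by blast
  then show ?thesis by (simp add: sphere_slice_def)
qed

lemma integrable_continuous: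
  assumes "continuous_on UNIV g" shows "integrable M (g :: real^'n \<Rightarrow> real)"
proof -
  have "sphere_slice v \<xi> = sphere 0 1 \<inter> {x. v \<bullet> x = \<xi>}" by (auto simp: sphere_slice_def)
  moreover have "closed {x. v \<bullet> x = \<xi>}" by (intro closed_Collect_eq continuous_intros)
  ultimately have "compact (sphere_slice v \<xi>)" by (simp add: compact_Int_closed)
  then have "compact (g ` sphere_slice v \<xi>)"
    by (rule compact_continuous_image[OF continuous_on_subset[OF assms subset_UNIV]])
  then obtain B where B: "\<forall>y\<in>g ` sphere_slice v \<xi>. norm y \<le> B"
    using compact_imp_bounded bounded_iff by metis
  have "AE x in M. norm (g x) \<le> B" using AE_slice
    by eventually_elim (use B in \<open>auto simp: sphere_slice_def\<close>)
  then show ?thesis using continuous_on_borel_measurable_M[OF assms] by (rule integrable_const_bound)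
qed

lemma integral_AE_eq_const:
  assumes "AE x in M. f x = c" "continuous_on UNIV f" shows "(\<integral>x. f x \<partial>M) = (c :: real)"
proof -
  have "(\<integral>x. f x \<partial>M) = (\<integral>x. c \<partial>M)"
    using assms by (intro integral_cong_AE continuous_on_borel_measurable_M) auto
  then show ?thesis by (simp add: prob_space)
qed

lemma integral_comp_householder:
  assumes "a \<bullet> v = 0" "g \<in> borel_measurable borel"
  shows "(\<integral>x. g (householder a x) \<partial>M) = (\<integral>x. (g x :: real) \<partial>M)"
proof -
  have "householder a v = v" using assms(1) by (simp add: householder_orthogonal inner_commute)
  then have "distr M borel (householder a) = M"
    using uniform orthogonal_transformation_householder unfolding uniform_on_slice_def by blast
  then have "(\<integral>x. g x \<partial>M) = (\<integral>x. g x \<partial>distr M borel (householder a))" by simp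
  also have "\<dots> = (\<integral>x. g (householder a x) \<partial>M)"
    by (intro integral_distr assms(2) continuous_on_borel_measurable_M continuous_on_householder)
  finally show ?thesis by simp
qed

lemma integral_odd_power_zero:
  assumes "q \<bullet> v = 0" "p \<bullet> q = 0" "odd b"
  shows "(\<integral>x. (p \<bullet> x)^a * (q \<bullet> x)^b \<partial>M) = 0"
proof -
  let ?g = "\<lambda>x. (p \<bullet> x)^a * (q \<bullet> x)^b"
  have "?g (householder q x) = - ?g x" for x
  proof -
    have "p \<bullet> householder q x = p \<bullet> x"
      using inner_householder_swap[of q x p] householder_orthogonal[of q p] assms
      by (simp add: inner_commute)
    moreover have "q \<bullet> householder q x = - (q \<bullet> x)"
      using inner_householder_swap[of q x q] householder_self[of q] by (simp add: inner_commute)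
    ultimately show ?thesis using assms(3) by simp
  qed
  moreover have "?g \<in> borel_measurable borel"
    by (intro borel_measurable_continuous_onI continuous_intros)
  ultimately have "(\<integral>x. ?g x \<partial>M) = (\<integral>x. - ?g x \<partial>M)"
    using integral_comp_householder[OF assms(1), of ?g] by simp
  then show ?thesis by simp
qed

lemma integral_power_inner_norm_eq:
  assumes "p \<bullet> v = 0" "q \<bullet> v = 0" "norm p = norm q"
  shows "(\<integral>x. (p \<bullet> x)^k \<partial>M) = (\<integral>x. (q \<bullet> x)^k \<partial>M)"
proof -
  have "householder (p - q) q = p"
    using householder_diff_swap[OF assms(3)] by (metis householder_householder)
  then have "q \<bullet> householder (p - q) x = p \<bullet> x" for x
    using inner_householder_swap[of "p - q" x q] by (simp add: inner_commute)
  moreover have "(p - q) \<bullet> v = 0" using assms by (simp add: inner_diff_left)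
  moreover have "(\<lambda>x. (q \<bullet> x)^k) \<in> borel_measurable borel"
    by (intro borel_measurable_continuous_onI continuous_intros)
  ultimately show ?thesis using integral_comp_householder[of "p - q" "\<lambda>x. (q \<bullet> x)^k"] by simp
qed

lemma integral_power_inner_homogeneous:
  assumes "p \<bullet> v = 0" "f \<bullet> v = 0" "norm f = 1"
  shows "(\<integral>x. (p \<bullet> x)^k \<partial>M) = norm p ^ k * (\<integral>x. (f \<bullet> x)^k \<partial>M)"
proof (cases "p = 0")
  case True
  then show ?thesis by (cases k) (simp_all add: prob_space lebesgue_integral_const)
next
  case False
  define p' where "p' = (1 / norm p) *\<^sub>R p"
  have "p = norm p *\<^sub>R p'" using False by (simp add: p'_def)
  then have "(p \<bullet> x)^k = norm p ^ k * (p' \<bullet> x)^k" for x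
    by (metis inner_scaleR_left power_mult_distrib)
  then have "(\<integral>x. (p \<bullet> x)^k \<partial>M) = norm p ^ k * (\<integral>x. (p' \<bullet> x)^k \<partial>M)" by simp
  also have "(\<integral>x. (p' \<bullet> x)^k \<partial>M) = (\<integral>x. (f \<bullet> x)^k \<partial>M)"
    using False assms by (intro integral_power_inner_norm_eq) (simp_all add: p'_def)
  finally show ?thesis .
qed

lemma slice_frame:
  obtains K :: "'n set" and b :: "'n \<Rightarrow> real^'n"
  where "card K = CARD('n) - 1" "\<And>i. i \<in> K \<Longrightarrow> b i \<bullet> v = 0" "\<And>i. norm (b i) = 1"
    "\<And>i j. i \<noteq> j \<Longrightarrow> b i \<bullet> b j = 0"
    "AE x in M. (\<Sum>i\<in>K. (b i \<bullet> x)\<^sup>2) = 1 - \<xi>\<^sup>2"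
proof -
  obtain b :: "'n \<Rightarrow> real^'n" and k where bk: "b k = v" and orth: "\<And>i j. b i \<bullet> b j = (if i = j then 1 else 0)"
    and parseval: "\<And>x. (\<Sum>i\<in>UNIV. (b i \<bullet> x)\<^sup>2) = (norm x)\<^sup>2"
    by (metis orthonormal_frame_through[OF norm_v])
  define K where "K = UNIV - {k}"
  have "card K = CARD('n) - 1" by (simp add: K_def card_Diff_singleton)
  moreover have "b i \<bullet> v = 0" if "i \<in> K" for i
    using orth[of i k] that unfolding bk K_def by simp
  moreover have "norm (b i) = 1" for i using orth[of i i] by (simp add: norm_eq_sqrt_inner)
  moreover have "b i \<bullet> b j = 0" if "i \<noteq> j" for i j using orth[of i j] that by simp
  moreover have "AE x in M. (\<Sum>i\<in>K. (b i \<bullet> x)\<^sup>2) = 1 - \<xi>\<^sup>2"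
    using AE_slice
  proof eventually_elim
    case (elim x)
    have "(\<Sum>i\<in>K. (b i \<bullet> x)\<^sup>2) = (\<Sum>i\<in>UNIV. (b i \<bullet> x)\<^sup>2) - (b k \<bullet> x)\<^sup>2"
      unfolding K_def by (simp add: sum_diff1)
    then show ?case using parseval[of x] elim bk by simp
  qed
  ultimately show ?thesis by (rule that)
qed

lemma integral_inner_sq_orthogonal:
  assumes "2 \<le> CARD('n)" "p \<bullet> v = 0"
  shows "(\<integral>x. (p \<bullet> x)\<^sup>2 \<partial>M) = (norm p)\<^sup>2 * ((1 - \<xi>\<^sup>2) / (real CARD('n) - 1))"
proof -
  obtain K and b :: "'n \<Rightarrow> real^'n" where card: "card K = CARD('n) - 1" and bv: "\<And>i. i \<in> K \<Longrightarrow> b i \<bullet> v = 0"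
    and bn: "\<And>i. norm (b i) = 1" and "\<And>i j. i \<noteq> j \<Longrightarrow> b i \<bullet> b j = 0"
    and AE: "AE x in M. (\<Sum>i\<in>K. (b i \<bullet> x)\<^sup>2) = 1 - \<xi>\<^sup>2"
    using slice_frame by blast
  have rK: "real (card K) = real CARD('n) - 1" using card assms(1) by (simp add: of_nat_diff)
  have "K \<noteq> {}" using card assms(1) by auto
  then obtain j where j: "j \<in> K" by blast
  define c2 where "c2 = (\<integral>x. (b j \<bullet> x)\<^sup>2 \<partial>M)"
  have "(\<integral>x. (\<Sum>i\<in>K. (b i \<bullet> x)\<^sup>2) \<partial>M) = (\<Sum>i\<in>K. \<integral>x. (b i \<bullet> x)\<^sup>2 \<partial>M)"
    by (intro Bochner_Integration.integral_sum integrable_continuous continuous_intros)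
  also have "\<dots> = (\<Sum>i\<in>K. c2)"
    unfolding c2_def using bv bn j by (intro sum.cong refl integral_power_inner_norm_eq) auto
  finally have "real (card K) * c2 = 1 - \<xi>\<^sup>2"
    using integral_AE_eq_const[OF AE] by (simp add: continuous_intros)
  then have "c2 = (1 - \<xi>\<^sup>2) / (real CARD('n) - 1)" using rK assms(1) by (simp add: field_simps)
  then show ?thesis
    using integral_power_inner_homogeneous[OF assms(2) bv[OF j] bn] by (simp add: c2_def)
qed

lemma integral_sq_mult_sq:
  assumes "e \<bullet> v = 0" "f \<bullet> v = 0" "norm e = 1" "norm f = 1" "e \<bullet> f = 0"
  shows "(\<integral>x. (e \<bullet> x)\<^sup>2 * (f \<bullet> x)\<^sup>2 \<partial>M) = (\<integral>x. (e \<bullet> x)^4 \<partial>M) / 3"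
proof -
  have "(norm (e + f))\<^sup>2 = 2"
    using assms(3-5) by (simp add: power2_norm_eq_inner inner_add_left inner_add_right inner_commute norm_eq_1)
  moreover have "norm (e + f) ^ 4 = ((norm (e + f))\<^sup>2)\<^sup>2" by simp
  ultimately have "norm (e + f) ^ 4 = 4" by simp
  then have sum4: "(\<integral>x. ((e + f) \<bullet> x)^4 \<partial>M) = 4 * (\<integral>x. (e \<bullet> x)^4 \<partial>M)"
    using integral_power_inner_homogeneous[of "e + f" e 4] assms by (simp add: inner_add_left)
  have "((e + f) \<bullet> x)^4 = (e \<bullet> x)^4 + (4 * ((e \<bullet> x)^3 * (f \<bullet> x)^1)
       + (6 * ((e \<bullet> x)\<^sup>2 * (f \<bullet> x)\<^sup>2) + (4 * ((e \<bullet> x)^1 * (f \<bullet> x)^3) + (f \<bullet> x)^4)))" for x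
    by (simp add: inner_add_left power4_eq_xxxx power3_eq_cube power2_eq_square algebra_simps)
  then have "(\<integral>x. ((e + f) \<bullet> x)^4 \<partial>M) = (\<integral>x. (e \<bullet> x)^4 \<partial>M)
      + (4 * (\<integral>x. (e \<bullet> x)^3 * (f \<bullet> x)^1 \<partial>M) + (6 * (\<integral>x. (e \<bullet> x)\<^sup>2 * (f \<bullet> x)\<^sup>2 \<partial>M)
      + (4 * (\<integral>x. (e \<bullet> x)^1 * (f \<bullet> x)^3 \<partial>M) + (\<integral>x. (f \<bullet> x)^4 \<partial>M))))"
    by (simp only:) (subst Bochner_Integration.integral_add | subst integral_mult_right_zero | rule refl
        | intro integrable_continuous continuous_intros integrable_mult_right integrable_add)+
  moreover have "(\<integral>x. (e \<bullet> x)^3 * (f \<bullet> x)^1 \<partial>M) = 0" "(\<integral>x. (e \<bullet> x)^1 * (f \<bullet> x)^3 \<partial>M) = 0"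
    by (rule integral_odd_power_zero; use assms in simp)+
  moreover have "(\<integral>x. (f \<bullet> x)^4 \<partial>M) = (\<integral>x. (e \<bullet> x)^4 \<partial>M)"
    using assms by (intro integral_power_inner_norm_eq) simp_all
  ultimately show ?thesis using sum4 by simp
qed

lemma sum_integral_sq_mult_sq:
  assumes "finite K" "i \<in> K" "\<And>l. l \<in> K \<Longrightarrow> b l \<bullet> v = 0" "\<And>l. norm (b l) = 1"
    "\<And>l m. l \<noteq> m \<Longrightarrow> b l \<bullet> b m = 0"
  shows "(\<Sum>l\<in>K. \<integral>x. (b i \<bullet> x)\<^sup>2 * (b l \<bullet> x)\<^sup>2 \<partial>M)
    = (real (card K) + 2) / 3 * (\<integral>x. (b i \<bullet> x)^4 \<partial>M)"
proof -
  let ?c = "\<integral>x. (b i \<bullet> x)^4 \<partial>M"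
  have "(\<Sum>l\<in>K. \<integral>x. (b i \<bullet> x)\<^sup>2 * (b l \<bullet> x)\<^sup>2 \<partial>M)
      = (\<integral>x. (b i \<bullet> x)\<^sup>2 * (b i \<bullet> x)\<^sup>2 \<partial>M) + (\<Sum>l\<in>K - {i}. \<integral>x. (b i \<bullet> x)\<^sup>2 * (b l \<bullet> x)\<^sup>2 \<partial>M)"
    using assms(1,2) by (intro sum.remove)
  also have "(\<integral>x. (b i \<bullet> x)\<^sup>2 * (b i \<bullet> x)\<^sup>2 \<partial>M) = ?c"
    by (simp add: power4_eq_xxxx power2_eq_square mult.assoc)
  also have "(\<Sum>l\<in>K - {i}. \<integral>x. (b i \<bullet> x)\<^sup>2 * (b l \<bullet> x)\<^sup>2 \<partial>M) = (\<Sum>l\<in>K - {i}. ?c / 3)"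
    using assms by (intro sum.cong refl integral_sq_mult_sq) auto
  also have "?c + (\<Sum>l\<in>K - {i}. ?c / 3) = (real (card K) + 2) / 3 * ?c"
  proof -
    have "1 \<le> card K" using assms(1,2) by (auto simp: Suc_le_eq card_gt_0_iff)
    then show ?thesis using assms(1,2) by (simp add: card_Diff_singleton of_nat_diff field_simps)
  qed
  finally show ?thesis .
qed

lemma integral_inner_pow4_orthogonal:
  assumes "2 \<le> CARD('n)" "p \<bullet> v = 0"
  shows "(\<integral>x. (p \<bullet> x)^4 \<partial>M)
    = norm p ^ 4 * (3 * (1 - \<xi>\<^sup>2)\<^sup>2 / ((real CARD('n) - 1) * (real CARD('n) + 1)))"
proof -
  obtain K and b :: "'n \<Rightarrow> real^'n" where card: "card K = CARD('n) - 1"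
    and bv: "\<And>i. i \<in> K \<Longrightarrow> b i \<bullet> v = 0" and bn: "\<And>i. norm (b i) = 1"
    and orth: "\<And>i j. i \<noteq> j \<Longrightarrow> b i \<bullet> b j = 0"
    and AE: "AE x in M. (\<Sum>i\<in>K. (b i \<bullet> x)\<^sup>2) = 1 - \<xi>\<^sup>2"
    using slice_frame by blast
  have rK: "real (card K) = real CARD('n) - 1" using card assms(1) by (simp add: of_nat_diff)
  have "K \<noteq> {}" using card assms(1) by auto
  then obtain j where j: "j \<in> K" by blast
  define c4 where "c4 = (\<integral>x. (b j \<bullet> x)^4 \<partial>M)"
  have "(1 - \<xi>\<^sup>2)\<^sup>2 = (\<integral>x. (\<Sum>i\<in>K. \<Sum>l\<in>K. (b i \<bullet> x)\<^sup>2 * (b l \<bullet> x)\<^sup>2) \<partial>M)"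
  proof (rule integral_AE_eq_const[symmetric])
    show "AE x in M. (\<Sum>i\<in>K. \<Sum>l\<in>K. (b i \<bullet> x)\<^sup>2 * (b l \<bullet> x)\<^sup>2) = (1 - \<xi>\<^sup>2)\<^sup>2"
      using AE by eventually_elim (simp add: sum_product[symmetric] power2_eq_square)
  qed (intro continuous_intros)
  also have "\<dots> = (\<Sum>i\<in>K. \<Sum>l\<in>K. \<integral>x. (b i \<bullet> x)\<^sup>2 * (b l \<bullet> x)\<^sup>2 \<partial>M)"
    by (simp add: Bochner_Integration.integral_sum integrable_continuous continuous_intros)
  also have "\<dots> = (\<Sum>i\<in>K. (real (card K) + 2) / 3 * c4)"
  proof (intro sum.cong refl)
    fix i assume "i \<in> K"
    moreover have "(\<integral>x. (b i \<bullet> x)^4 \<partial>M) = c4"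
      unfolding c4_def using bv bn j \<open>i \<in> K\<close> by (intro integral_power_inner_norm_eq) auto
    ultimately show "(\<Sum>l\<in>K. \<integral>x. (b i \<bullet> x)\<^sup>2 * (b l \<bullet> x)\<^sup>2 \<partial>M) = (real (card K) + 2) / 3 * c4"
      using sum_integral_sq_mult_sq[of K i b] bv bn orth by simp
  qed
  finally have "(1 - \<xi>\<^sup>2)\<^sup>2 = real (card K) * ((real (card K) + 2) / 3 * c4)" by simp
  then have "c4 * ((real CARD('n) - 1) * (real CARD('n) + 1)) = 3 * (1 - \<xi>\<^sup>2)\<^sup>2"
    unfolding rK by (simp add: field_simps)
  moreover have "(real CARD('n) - 1) * (real CARD('n) + 1) \<noteq> 0" using assms(1) by simp
  ultimately have "c4 = 3 * (1 - \<xi>\<^sup>2)\<^sup>2 / ((real CARD('n) - 1) * (real CARD('n) + 1))"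
    by (simp add: field_simps)
  then show ?thesis
    using integral_power_inner_homogeneous[OF assms(2) bv[OF j] bn] by (simp add: c4_def)
qed

lemma integral_quartic_inner:
  assumes "p \<bullet> v = 0"
  shows "(\<integral>x. c0 + c1 * (p \<bullet> x) + c2 * (p \<bullet> x)\<^sup>2 + c4 * (p \<bullet> x)^4 \<partial>M)
    = c0 + c2 * (\<integral>x. (p \<bullet> x)\<^sup>2 \<partial>M) + c4 * (\<integral>x. (p \<bullet> x)^4 \<partial>M)"
proof -
  have "(\<integral>x. p \<bullet> x \<partial>M) = 0"
    using integral_odd_power_zero[of p 0 1 0] assms by simp
  then show ?thesis
    by (simp add: Bochner_Integration.integral_add integrable_continuous continuous_intros prob_space)
qed

lemma AE_inner_split: "AE x in M. u \<bullet> x = (u \<bullet> v) * \<xi> + perp_part v u \<bullet> x"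
  using AE_slice by eventually_elim (simp add: perp_part_def inner_diff_left inner_commute[of v])

lemma integral_inner: "(\<integral>x. u \<bullet> x \<partial>M) = (u \<bullet> v) * \<xi>"
proof -
  let ?w = "perp_part v u"
  have "(\<integral>x. u \<bullet> x \<partial>M)
      = (\<integral>x. (u \<bullet> v) * \<xi> + 1 * (?w \<bullet> x) + 0 * (?w \<bullet> x)\<^sup>2 + 0 * (?w \<bullet> x)^4 \<partial>M)"
    using AE_inner_split[of u]
    by (intro integral_cong_AE continuous_on_borel_measurable_M continuous_intros) auto
  also have "\<dots> = (u \<bullet> v) * \<xi>"
    by (subst integral_quartic_inner[OF inner_perp_part[OF norm_v]]) simp
  finally show ?thesis .
qed

lemma integral_perp_part_sq:
  assumes "2 \<le> CARD('n)" "norm u = 1"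
  shows "(\<integral>x. (perp_part v u \<bullet> x)\<^sup>2 \<partial>M) = (1 - (u \<bullet> v)\<^sup>2) * ((1 - \<xi>\<^sup>2) / (real CARD('n) - 1))"
  using integral_inner_sq_orthogonal[OF assms(1) inner_perp_part[OF norm_v]]
    norm_perp_part_sq[OF norm_v, of u] assms(2) by simp

lemma integral_perp_part_pow4:
  assumes "2 \<le> CARD('n)" "norm u = 1"
  shows "(\<integral>x. (perp_part v u \<bullet> x) ^ 4 \<partial>M)
    = (1 - (u \<bullet> v)\<^sup>2)\<^sup>2 * (3 * (1 - \<xi>\<^sup>2)\<^sup>2 / ((real CARD('n) - 1) * (real CARD('n) + 1)))"
proof -
  have "norm (perp_part v u) ^ 4 = ((norm (perp_part v u))\<^sup>2)\<^sup>2" by simp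
  then show ?thesis
    using integral_inner_pow4_orthogonal[OF assms(1) inner_perp_part[OF norm_v]]
      norm_perp_part_sq[OF norm_v, of u] assms(2) by simp
qed

lemma integral_inner_sq:
  assumes "2 \<le> CARD('n)" "norm u = 1"
  shows "(\<integral>x. (u \<bullet> x)\<^sup>2 \<partial>M) = (u \<bullet> v)\<^sup>2 * \<xi>\<^sup>2 + (1 - (u \<bullet> v)\<^sup>2) * ((1 - \<xi>\<^sup>2) / (real CARD('n) - 1))"
proof -
  let ?w = "perp_part v u"
  have "(\<integral>x. (u \<bullet> x)\<^sup>2 \<partial>M)
      = (\<integral>x. ((u \<bullet> v) * \<xi>)\<^sup>2 + (2 * (u \<bullet> v) * \<xi>) * (?w \<bullet> x) + 1 * (?w \<bullet> x)\<^sup>2 + 0 * (?w \<bullet> x)^4 \<partial>M)"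
    using AE_inner_split[of u]
    by (intro integral_cong_AE continuous_on_borel_measurable_M continuous_intros)
       (auto elim!: eventually_mono simp: power2_eq_square algebra_simps)
  also have "\<dots> = ((u \<bullet> v) * \<xi>)\<^sup>2 + (\<integral>x. (?w \<bullet> x)\<^sup>2 \<partial>M)"
    by (subst integral_quartic_inner[OF inner_perp_part[OF norm_v]]) simp
  finally show ?thesis using integral_perp_part_sq[OF assms] by (simp add: power_mult_distrib)
qed

lemma integrable_inner_negative_part:
  assumes "norm u = 1"
  shows "integrable M (\<lambda>x. (u \<bullet> x) * indicator {y. u \<bullet> y < 0} x)"
proof (rule integrable_const_bound)
  show "AE x in M. norm ((u \<bullet> x) * indicator {y. u \<bullet> y < 0} x) \<le> 1"
    using AE_slice
  proof eventually_elim
    case (elim x)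
    then have "\<bar>u \<bullet> x\<bar> \<le> 1" using Cauchy_Schwarz_ineq2[of u x] assms by simp
    then show ?case by (auto simp: indicator_def abs_le_iff)
  qed
qed (auto simp: borel_measurable_M_iff intro!: continuous_intros borel_measurable_times
       borel_measurable_continuous_onI borel_measurable_indicator borel_open open_Collect_less)

lemma integral_negative_part_le:
  assumes "2 \<le> CARD('n)" "norm u = 1" "0 \<le> \<xi>" "0 < t"
  shows "(\<integral>x. (u \<bullet> x) * indicator {y. u \<bullet> y < 0} x \<partial>M)
    \<le> \<xi> - (3 * ((1 - (u \<bullet> v)\<^sup>2) * ((1 - \<xi>\<^sup>2) / (real CARD('n) - 1))) / t
        - (1 - (u \<bullet> v)\<^sup>2)\<^sup>2 * (3 * (1 - \<xi>\<^sup>2)\<^sup>2 / ((real CARD('n) - 1) * (real CARD('n) + 1))) / t ^ 3) / 4"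
proof -
  let ?w = "perp_part v u" and ?a = "u \<bullet> v"
  have a: "\<bar>?a * \<xi>\<bar> \<le> \<xi>"
    using Cauchy_Schwarz_ineq2[of u v] assms(2,3) norm_v mult_right_mono[of "\<bar>?a\<bar>" 1 \<xi>]
    by (simp add: abs_mult)
  define F where "F x = (?a * \<xi> + \<xi>) / 2 + 1 / 2 * (?w \<bullet> x) + - 3 / (4 * t) * (?w \<bullet> x)\<^sup>2
    + 1 / (4 * t ^ 3) * (?w \<bullet> x) ^ 4" for x
  have "AE x in M. (u \<bullet> x) * indicator {y. u \<bullet> y < 0} x \<le> F x"
    using AE_inner_split[of u]
  proof eventually_elim
    case (elim x)
    then have "(u \<bullet> x) * indicator {y. u \<bullet> y < 0} x
        = (?a * \<xi> + ?w \<bullet> x) * (if ?a * \<xi> + ?w \<bullet> x < 0 then 1 else 0)"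
      by (simp add: indicator_def)
    also have "\<dots> \<le> F x" unfolding F_def by (rule negative_part_le_quartic[OF a assms(4)])
    finally show ?case .
  qed
  moreover have "integrable M F" unfolding F_def by (intro integrable_continuous continuous_intros)
  ultimately have "(\<integral>x. (u \<bullet> x) * indicator {y. u \<bullet> y < 0} x \<partial>M) \<le> (\<integral>x. F x \<partial>M)"
    using integrable_inner_negative_part[OF assms(2)] by (intro integral_mono_AE)
  also have "(\<integral>x. F x \<partial>M) = (?a * \<xi> + \<xi>) / 2 + - 3 / (4 * t) * (\<integral>x. (?w \<bullet> x)\<^sup>2 \<partial>M)
      + 1 / (4 * t ^ 3) * (\<integral>x. (?w \<bullet> x) ^ 4 \<partial>M)"
    unfolding F_def by (rule integral_quartic_inner[OF inner_perp_part[OF norm_v]])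
  also have "\<dots> \<le> \<xi> - (3 * (\<integral>x. (?w \<bullet> x)\<^sup>2 \<partial>M) / t - (\<integral>x. (?w \<bullet> x) ^ 4 \<partial>M) / t ^ 3) / 4"
    using a by (simp add: field_simps)
  finally show ?thesis unfolding integral_perp_part_sq[OF assms(1,2)] integral_perp_part_pow4[OF assms(1,2)] .
qed

end

theorem lemma19:
  fixes u v :: "real ^ 'n" and \<xi> \<theta> :: real and M :: "(real ^ 'n) measure"
  assumes d: "CARD('n) \<ge> 3"
    and u: "norm u = 1" and v: "norm v = 1"
    and theta: "\<theta> = arccos (u \<bullet> v)" and theta_le: "\<theta> \<le> 9 / 10 * pi"
    and xi0: "0 \<le> \<xi>" and xi1: "\<xi> \<le> \<theta> / (4 * sqrt (real CARD('n)))"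
    and M: "uniform_on_slice M v \<xi>"
  shows "(\<integral>x. u \<bullet> x \<partial>M) \<le> \<xi>
    \<and> (\<integral>x. (u \<bullet> x)\<^sup>2 \<partial>M) \<le> 5 * \<theta>\<^sup>2 / real CARD('n)
    \<and> (\<integral>x. (u \<bullet> x) * indicator {y. u \<bullet> y < 0} x \<partial>M)
           \<le> \<xi> - \<theta> / (36 * sqrt (real CARD('n)))"
proof -
  interpret uniform_slice M v \<xi> using M v by unfold_locales
  have d2: "2 \<le> CARD('n)" and d3: "3 \<le> real CARD('n)" using d by simp_all
  have a: "\<bar>u \<bullet> v\<bar> \<le> 1" using Cauchy_Schwarz_ineq2[of u v] u v by simp
  then have \<theta>0: "0 \<le> \<theta>" and sin_sq: "(sin \<theta>)\<^sup>2 = 1 - (u \<bullet> v)\<^sup>2"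
    using theta by (simp_all add: arccos_lbound abs_le_iff sin_arccos_abs abs_square_le_1)
  have sin: "27/250 * \<theta> \<le> sin \<theta>" "sin \<theta> \<le> \<theta>"
    using sin_ge_linear_upto_9_10_pi[OF \<theta>0 theta_le] sin_x_le_x[OF \<theta>0] by simp_all
  note height = slice_height_bounds[OF d3 xi0 xi1 \<theta>0 theta_le]
  have mean: "(\<integral>x. u \<bullet> x \<partial>M) \<le> \<xi>"
    using integral_inner[of u] a xi0 mult_right_mono[of "u \<bullet> v" 1 \<xi>] by simp
  have "1 - (u \<bullet> v)\<^sup>2 \<le> \<theta>\<^sup>2"
    unfolding sin_sq[symmetric] using sin \<theta>0 by (intro power_mono) auto
  then have second: "(\<integral>x. (u \<bullet> x)\<^sup>2 \<partial>M) \<le> 5 * \<theta>\<^sup>2 / real CARD('n)"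
    using integral_inner_sq[OF d2 u] second_moment_estimate[OF d3 _ _ height(1)] a
    by (simp add: abs_square_le_1)
  obtain t where t: "0 < t" and tradeoff: "\<theta> / (9 * sqrt (real CARD('n)))
      \<le> 3 * ((sin \<theta>)\<^sup>2 * ((1 - \<xi>\<^sup>2) / (real CARD('n) - 1))) / t
        - ((sin \<theta>)\<^sup>2)\<^sup>2 * (3 * (1 - \<xi>\<^sup>2)\<^sup>2 / ((real CARD('n) - 1) * (real CARD('n) + 1))) / t ^ 3"
    using exists_quartic_tradeoff[where d = "real CARD('n)", OF _ \<theta>0 sin(1) height(2)] d3 by auto
  have "(\<integral>x. (u \<bullet> x) * indicator {y. u \<bullet> y < 0} x \<partial>M) \<le> \<xi> - \<theta> / (9 * sqrt (real CARD('n))) / 4"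
    using tradeoff unfolding sin_sq
    by (intro order_trans[OF integral_negative_part_le[OF d2 u xi0 t]] diff_left_mono divide_right_mono) simp_all
  then have "(\<integral>x. (u \<bullet> x) * indicator {y. u \<bullet> y < 0} x \<partial>M) \<le> \<xi> - \<theta> / (36 * sqrt (real CARD('n)))"
    by simp
  with mean second show ?thesis by blast
qed

end
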